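(* Let $V$ be a finite set with positive element weights ($\vert A \vert$ = total weight of $A \subseteq V$), and let $\mathcal{P}, \mathcal{P}'$ be partitions of $V$ into nonempty parts. If an optimal $C_{\wedge}$-correspondence $(\mathcal{S}, \mathcal{S}')$ is not mutual, then $\vert \mathcal{S} \vert \in \{1, \vert \mathcal{P} \vert - 1\}$ or $\vert \mathcal{S}' \vert \in \{1, \vert \mathcal{P}' \vert - 1\}$.
   Context: For $\mathcal{S}$ a set of subsets of $V$, $U_{\mathcal{S}}$ is their union. A correspondence is a pair $(\mathcal{S}, \mathcal{S}')$ with $\mathcal{S} \subseteq \mathcal{P}$, $\mathcal{S}' \subseteq \mathcal{P}'$, with cost $\vert U_{\mathcal{S}} \triangle U_{\mathcal{S}'} \vert$. A $C_{\wedge}$-correspondence is one with $\mathcal{S} \notin \{\emptyset, \mathcal{P}\}$ and $\mathcal{S}' \notin \{\emptyset, \mathcal{P}'\}$; it is optimal if its cost is minimum among all $C_{\wedge}$-correspondences. A correspondence is mutual if (1) $\vert P \cap U_{\mathcal{S}'} \vert \ge \vert P \vert/2$ for all $P \in \mathcal{S}$, (2) $\vert P \cap U_{\mathcal{S}'} \vert \le \vert P \vert/2$ for all $P \in \mathcal{P} \setminus \mathcal{S}$, (3) $\vert P' \cap U_{\mathcal{S}} \vert \ge \vert P' \vert/2$ for all $P' \in \mathcal{S}'$, and (4) $\vert P' \cap U_{\mathcal{S}} \vert \le \vert P' \vert/2$ for all $P' \in \mathcal{P}' \setminus \mathcal{S}'$. *)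

theory Defs
  imports Complex_Main "HOL-Library.Disjoint_Sets"
begin

definition wt :: "('a \<Rightarrow> real) \<Rightarrow> 'a set \<Rightarrow> real" where
  "wt w A = sum w A"

text \<open>A partition of V into nonempty parts (library notion partition_on).\<close>

definition corr_cost :: "('a \<Rightarrow> real) \<Rightarrow> 'a set set \<Rightarrow> 'a set set \<Rightarrow> real" where
  "corr_cost w S S' = wt w ((\<Union>S - \<Union>S') \<union> (\<Union>S' - \<Union>S))"

definition is_corr :: "'a set set \<Rightarrow> 'a set set \<Rightarrow> 'a set set \<Rightarrow> 'a set set \<Rightarrow> bool" where
  "is_corr P P' S S' \<longleftrightarrow> S \<subseteq> P \<and> S' \<subseteq> P'"

definition is_Cwedge_corr :: "'a set set \<Rightarrow> 'a set set \<Rightarrow> 'a set set \<Rightarrow> 'a set set \<Rightarrow> bool" where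
  "is_Cwedge_corr P P' S S' \<longleftrightarrow>
     is_corr P P' S S' \<and> S \<notin> {{}, P} \<and> S' \<notin> {{}, P'}"

definition optimal_Cwedge_corr ::
  "('a \<Rightarrow> real) \<Rightarrow> 'a set set \<Rightarrow> 'a set set \<Rightarrow> 'a set set \<Rightarrow> 'a set set \<Rightarrow> bool" where
  "optimal_Cwedge_corr w P P' S S' \<longleftrightarrow>
     is_Cwedge_corr P P' S S' \<and>
     (\<forall>T T'. is_Cwedge_corr P P' T T' \<longrightarrow> corr_cost w S S' \<le> corr_cost w T T')"

definition mutual_corr ::
  "('a \<Rightarrow> real) \<Rightarrow> 'a set set \<Rightarrow> 'a set set \<Rightarrow> 'a set set \<Rightarrow> 'a set set \<Rightarrow> bool" where
  "mutual_corr w P P' S S' \<longleftrightarrow>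
     (\<forall>X\<in>S. wt w (X \<inter> \<Union>S') \<ge> wt w X / 2) \<and>
     (\<forall>X\<in>P - S. wt w (X \<inter> \<Union>S') \<le> wt w X / 2) \<and>
     (\<forall>X\<in>S'. wt w (X \<inter> \<Union>S) \<ge> wt w X / 2) \<and>
     (\<forall>X\<in>P' - S'. wt w (X \<inter> \<Union>S) \<le> wt w X / 2)"

end

theory Submission
  imports Defs
begin

text \<open>Moving a single part X across the cut changes the cost by
  |X \<setminus> \<Union>S'| - |X \<inter> \<Union>S'| = |X| - 2|X \<inter> \<Union>S'|. So if (S, S') is optimal and S can lose or gain
  a part without becoming trivial, every part of S is at least half covered by \<Union>S' and every
  other part at most half; symmetrically for S'. Hence a non-mutual optimal correspondence must
  have S or S' one step away from \<open>{}\<close> or the whole partition.\<close>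

definition majority_selection :: "('a \<Rightarrow> real) \<Rightarrow> 'a set set \<Rightarrow> 'a set set \<Rightarrow> 'a set \<Rightarrow> bool" where
  "majority_selection w P S U \<longleftrightarrow>
     (\<forall>X\<in>S. wt w (X \<inter> U) \<ge> wt w X / 2) \<and> (\<forall>X\<in>P - S. wt w (X \<inter> U) \<le> wt w X / 2)"

lemma mutual_corr_iff_majority_selection:
  "mutual_corr w P P' S S' \<longleftrightarrow>
     majority_selection w P S (\<Union>S') \<and> majority_selection w P' S' (\<Union>S)"
  unfolding mutual_corr_def majority_selection_def by blast

lemma corr_cost_commute: "corr_cost w S S' = corr_cost w S' S"
  unfolding corr_cost_def by (simp add: Un_commute)

lemma corr_cost_insert_disjoint:
  assumes "finite (\<Union>T)" "finite X" "finite (\<Union>S')" "X \<inter> \<Union>T = {}"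
  shows "corr_cost w (insert X T) S' = corr_cost w T S' + wt w X - 2 * wt w (X \<inter> \<Union>S')"
proof -
  define D where "D = (\<Union>T - \<Union>S') \<union> (\<Union>S' - \<Union>T)"
  have symdiff: "(\<Union>(insert X T) - \<Union>S') \<union> (\<Union>S' - \<Union>(insert X T)) = (D - (X \<inter> \<Union>S')) \<union> (X - \<Union>S')"
    using assms(4) unfolding D_def by blast
  have "sum w ((D - (X \<inter> \<Union>S')) \<union> (X - \<Union>S')) = sum w (D - (X \<inter> \<Union>S')) + sum w (X - \<Union>S')"
    by (rule sum.union_disjoint) (use assms in \<open>auto simp: D_def\<close>)
  also have "sum w (D - (X \<inter> \<Union>S')) = sum w D - sum w (X \<inter> \<Union>S')"
    by (rule sum_diff) (use assms in \<open>auto simp: D_def\<close>)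
  also have "sum w (X - \<Union>S') = sum w X - sum w (X \<inter> \<Union>S')"
    using sum_diff[of X "X \<inter> \<Union>S'" w] assms(2) by (simp add: Diff_Int)
  finally show ?thesis
    unfolding corr_cost_def wt_def symdiff D_def by simp
qed

lemma half_covered_if_removal_not_cheaper:
  assumes "finite (\<Union>S)" "finite (\<Union>S')" "X \<in> S" "X \<inter> \<Union>(S - {X}) = {}"
    and "corr_cost w S S' \<le> corr_cost w (S - {X}) S'"
  shows "wt w (X \<inter> \<Union>S') \<ge> wt w X / 2"
proof -
  have "finite (\<Union>(S - {X}))" "finite X"
    using assms(1,3) by (auto intro: finite_subset)
  then have "corr_cost w S S' = corr_cost w (S - {X}) S' + wt w X - 2 * wt w (X \<inter> \<Union>S')"
    using corr_cost_insert_disjoint[of "S - {X}" X S' w] assms(2-4) by (simp add: insert_absorb)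
  with assms(5) show ?thesis by simp
qed

lemma half_uncovered_if_insertion_not_cheaper:
  assumes "finite (\<Union>S)" "finite X" "finite (\<Union>S')" "X \<inter> \<Union>S = {}"
    and "corr_cost w S S' \<le> corr_cost w (insert X S) S'"
  shows "wt w (X \<inter> \<Union>S') \<le> wt w X / 2"
  using corr_cost_insert_disjoint[OF assms(1-4), of w] assms(5) by simp

lemma majority_selection_if_locally_optimal:
  assumes "finite V" "partition_on V P" "finite (\<Union>S')"
    and "S \<subseteq> P" "card S \<notin> {1, card P - 1}"
    and opt: "\<And>T. T \<subseteq> P \<Longrightarrow> T \<noteq> {} \<Longrightarrow> T \<noteq> P \<Longrightarrow> corr_cost w S S' \<le> corr_cost w T S'"
  shows "majority_selection w P S (\<Union>S')"
proof -
  have "\<Union>P = V" and disj: "disjoint P"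
    using assms(2) by (auto simp: partition_on_def)
  then have "finite P" and fin_parts: "\<And>T. T \<subseteq> P \<Longrightarrow> finite (\<Union>T)"
    using assms(1) by (auto intro: finite_UnionD finite_subset)
  have disjoint_rest: "X \<inter> \<Union>T = {}" if "X \<in> P" "T \<subseteq> P - {X}" for X T
    using disjointD[OF disj] that by blast
  have "wt w (X \<inter> \<Union>S') \<ge> wt w X / 2" if "X \<in> S" for X
  proof (rule half_covered_if_removal_not_cheaper[OF fin_parts[OF assms(4)] assms(3) that])
    show "X \<inter> \<Union>(S - {X}) = {}"
      using disjoint_rest that assms(4) by blast
    have "S - {X} \<noteq> {}"
    proof
      assume "S - {X} = {}"
      with that have "S = {X}" by blast
      with assms(5) show False by simp
    qed
    moreover have "S - {X} \<noteq> P"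
      using that assms(4) by blast
    ultimately show "corr_cost w S S' \<le> corr_cost w (S - {X}) S'"
      using assms(4) by (intro opt) auto
  qed
  moreover have "wt w (X \<inter> \<Union>S') \<le> wt w X / 2" if "X \<in> P - S" for X
  proof (rule half_uncovered_if_insertion_not_cheaper[OF fin_parts[OF assms(4)] _ assms(3)])
    show "finite X" "X \<inter> \<Union>S = {}"
      using that fin_parts[of "{X}"] disjoint_rest[of X S] assms(4) by auto
    have "insert X S \<noteq> P"
    proof
      assume "insert X S = P"
      then have "card P = card S + 1"
        using that \<open>finite P\<close> assms(4) by (metis DiffD2 card_insert_disjoint finite_subset Suc_eq_plus1)
      then show False using assms(5) by simp
    qed
    then show "corr_cost w S S' \<le> corr_cost w (insert X S) S'"
      using that assms(4) by (intro opt) auto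
  qed
  ultimately show ?thesis
    unfolding majority_selection_def by blast
qed

theorem proposition12:
  fixes V :: "'a set" and w :: "'a \<Rightarrow> real" and P P' S S' :: "'a set set"
  assumes "finite V"
    and "\<And>v. v \<in> V \<Longrightarrow> w v > 0"
    and "partition_on V P" and "partition_on V P'"
    and "optimal_Cwedge_corr w P P' S S'"
    and "\<not> mutual_corr w P P' S S'"
  shows "card S \<in> {1, card P - 1} \<or> card S' \<in> {1, card P' - 1}"
proof (rule ccontr)
  assume trivial_sizes: "\<not> ?thesis"
  have sides: "S \<subseteq> P" "S' \<subseteq> P'" "S \<notin> {{}, P}" "S' \<notin> {{}, P'}"
    and opt: "\<And>T T'. is_Cwedge_corr P P' T T' \<Longrightarrow> corr_cost w S S' \<le> corr_cost w T T'"
    using assms(5) by (auto simp: optimal_Cwedge_corr_def is_Cwedge_corr_def is_corr_def)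
  have "\<Union>S \<subseteq> V" "\<Union>S' \<subseteq> V"
    using Union_mono[OF sides(1)] Union_mono[OF sides(2)] assms(3,4) by (simp_all add: partition_on_def)
  then have "finite (\<Union>S)" "finite (\<Union>S')"
    using assms(1) by (auto intro: finite_subset)
  have "majority_selection w P S (\<Union>S')"
    by (rule majority_selection_if_locally_optimal[OF assms(1,3) \<open>finite (\<Union>S')\<close> sides(1)])
      (use trivial_sizes sides opt in \<open>auto simp: is_Cwedge_corr_def is_corr_def\<close>)
  moreover have "majority_selection w P' S' (\<Union>S)"
    by (rule majority_selection_if_locally_optimal[OF assms(1,4) \<open>finite (\<Union>S)\<close> sides(2)])
      (use trivial_sizes sides opt[of S] in
        \<open>auto simp: is_Cwedge_corr_def is_corr_def corr_cost_commute[of w _ S]\<close>)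
  ultimately show False
    using assms(6) by (simp add: mutual_corr_iff_majority_selection)
qed

end
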